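(* Let $m,n\geq 2$ and let $V$ be the vertex set of $K_m\Box K_n$. If $S$ is a $\{2\}$-resolving set of $K_m\Box K_n$, then (1) there is a vertex $v\in V$ such that $\{v\}\cup(V\setminus N(v))\subseteq S$, or (2) every row and every column of $K_m\Box K_n$ contains at least two elements of $S$ and every quadruple contains at least one element of $S$.
   Context: $K_m\Box K_n$ has vertices $av$ with $a\in V(K_m)$, $v\in V(K_n)$; distinct $av,bu$ are adjacent iff $a=b$ or $u=v$. A column is a set $\{au: u\in V(K_n)\}$ for fixed $a\in V(K_m)$; a row is a set $\{au: a\in V(K_m)\}$ for fixed $u\in V(K_n)$. A quadruple is a set $\{av,au,bv,bu\}$ with $a\neq b$, $u\neq v$. $N(v)$ is the set of neighbours of $v$. $d$ is the shortest-path distance, $d(s,X)=\min_{x\in X}d(s,x)$, $\mathcal{D}_S(X)=(d(s_1,X),\dots,d(s_k,X))$ for $S=\{s_1,\dots,s_k\}$. $S$ is a $\{2\}$-resolving set if $\mathcal{D}_S(X)\neq\mathcal{D}_S(Y)$ for all distinct nonempty vertex sets $X,Y$ with $|X|,|Y|\leq 2$. *)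

theory Defs
  imports Main
begin

text \<open>The rook's graph K_m \<box> K_n. Vertex (a,v) stands for av, with a in V(K_m) = {0..<m}
  and v in V(K_n) = {0..<n}.\<close>

definition rV :: "nat \<Rightarrow> nat \<Rightarrow> (nat \<times> nat) set" where
  "rV m n = {0..<m} \<times> {0..<n}"

definition radj :: "nat \<Rightarrow> nat \<Rightarrow> nat \<times> nat \<Rightarrow> nat \<times> nat \<Rightarrow> bool" where
  "radj m n x y \<longleftrightarrow> x \<in> rV m n \<and> y \<in> rV m n \<and> x \<noteq> y \<and> (fst x = fst y \<or> snd x = snd y)"

definition redges :: "nat \<Rightarrow> nat \<Rightarrow> ((nat \<times> nat) \<times> (nat \<times> nat)) set" where
  "redges m n = {(x, y). radj m n x y}"

definition rdist :: "nat \<Rightarrow> nat \<Rightarrow> nat \<times> nat \<Rightarrow> nat \<times> nat \<Rightarrow> nat" where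
  "rdist m n x y = (LEAST k. (x, y) \<in> redges m n ^^ k)"

definition rnbhd :: "nat \<Rightarrow> nat \<Rightarrow> nat \<times> nat \<Rightarrow> (nat \<times> nat) set" where
  "rnbhd m n v = {u. radj m n v u}"

definition rsetdist :: "nat \<Rightarrow> nat \<Rightarrow> nat \<times> nat \<Rightarrow> (nat \<times> nat) set \<Rightarrow> nat" where
  "rsetdist m n s X = Min ((\<lambda>x. rdist m n s x) ` X)"

text \<open>D_S(X) = D_S(Y) iff d(s,X) = d(s,Y) for every s in S.\<close>
definition two_resolving :: "nat \<Rightarrow> nat \<Rightarrow> (nat \<times> nat) set \<Rightarrow> bool" where
  "two_resolving m n S \<longleftrightarrow> S \<subseteq> rV m n \<and>
     (\<forall>X Y. X \<subseteq> rV m n \<and> Y \<subseteq> rV m n \<and> X \<noteq> {} \<and> Y \<noteq> {} \<and> card X \<le> 2 \<and> card Y \<le> 2 \<and> X \<noteq> Y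
        \<longrightarrow> (\<exists>s\<in>S. rsetdist m n s X \<noteq> rsetdist m n s Y))"

definition rcolumn :: "nat \<Rightarrow> nat \<Rightarrow> (nat \<times> nat) set" where
  "rcolumn n a = {(a, u) | u. u < n}"

definition rrow :: "nat \<Rightarrow> nat \<Rightarrow> (nat \<times> nat) set" where
  "rrow m u = {(a, u) | a. a < m}"

end

theory Submission
  imports Defs
begin

text \<open>All distances in the rook's graph are 0, 1 or 2, so d(s, {x, y}) is the minimum of two such
  values and every claim reduces to a small case table. If a quadruple misses S, no vertex of S
  tells its two diagonals apart. If column a misses S, no vertex of S tells {(b,u)} from
  {(b,u), (a,u)}. If column a meets S only in (a,u), the failure of (1) at (a,u) gives a vertex
  (c,w) outside S at distance 2 from it, and then no vertex of S tells {(a,w), (c,u)} from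
  {(c,u), (c,w)}. Rows are columns of the transposed grid.\<close>

definition rook_dist :: "nat \<times> nat \<Rightarrow> nat \<times> nat \<Rightarrow> nat" where
  "rook_dist x y = (if x = y then 0 else if fst x = fst y \<or> snd x = snd y then 1 else 2)"

lemma rook_dist_swap [simp]: "rook_dist (prod.swap x) (prod.swap y) = rook_dist x y"
  by (auto simp: rook_dist_def prod_eq_iff)

lemma rdist_eq_rook_dist:
  assumes "x \<in> rV m n" "y \<in> rV m n"
  shows "rdist m n x y = rook_dist x y"
  unfolding rdist_def
proof (rule Least_equality)
  obtain a u b v where xy: "x = (a, u)" "y = (b, v)"
    by fastforce
  have "(x, y) \<in> redges m n ^^ 2" if "a \<noteq> b" "u \<noteq> v"
  proof -
    have "(x, (a, v)) \<in> redges m n" "((a, v), y) \<in> redges m n"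
      using assms xy that by (auto simp: redges_def radj_def rV_def)
    then show ?thesis
      using relpow_Suc_I2[of x "(a, v)" "redges m n" y 1] by (simp add: numeral_2_eq_2)
  qed
  then show "(x, y) \<in> redges m n ^^ rook_dist x y"
    using assms xy by (auto simp: rook_dist_def redges_def radj_def)
next
  fix k assume walk: "(x, y) \<in> redges m n ^^ k"
  consider "k = 0" | "k = 1" | "k \<ge> 2" by linarith
  then show "rook_dist x y \<le> k"
    by cases (use walk in \<open>auto simp: rook_dist_def redges_def radj_def\<close>)
qed

lemma rsetdist_doubleton:
  assumes "s \<in> rV m n" "x \<in> rV m n" "y \<in> rV m n"
  shows "rsetdist m n s {x, y} = min (rook_dist s x) (rook_dist s y)"
  using assms by (simp add: rsetdist_def rdist_eq_rook_dist)

text \<open>Singletons are the pairs {x, x}, so this is the {2}-resolving property with the distance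
  made explicit.\<close>

definition resolves_pairs :: "nat \<Rightarrow> nat \<Rightarrow> (nat \<times> nat) set \<Rightarrow> bool" where
  "resolves_pairs m n S \<longleftrightarrow>
     (\<forall>x y x' y'. {x, y} \<subseteq> rV m n \<and> {x', y'} \<subseteq> rV m n \<and> {x, y} \<noteq> {x', y'} \<longrightarrow>
        (\<exists>s\<in>S. min (rook_dist s x) (rook_dist s y) \<noteq> min (rook_dist s x') (rook_dist s y')))"

lemma resolves_pairsE:
  assumes "resolves_pairs m n S" "{x, y} \<subseteq> rV m n" "{x', y'} \<subseteq> rV m n" "{x, y} \<noteq> {x', y'}"
  obtains s where "s \<in> S" "min (rook_dist s x) (rook_dist s y) \<noteq> min (rook_dist s x') (rook_dist s y')"
  using assms(1)[unfolded resolves_pairs_def, rule_format, of x y x' y'] assms(2-4) by blast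

lemma two_resolving_imp_resolves_pairs:
  assumes "two_resolving m n S"
  shows "resolves_pairs m n S"
  unfolding resolves_pairs_def
proof (intro allI impI)
  fix x y x' y'
  assume xy: "{x, y} \<subseteq> rV m n \<and> {x', y'} \<subseteq> rV m n \<and> {x, y} \<noteq> {x', y'}"
  have "card {x, y} \<le> 2" "card {x', y'} \<le> 2"
    by (simp_all add: card_insert_if)
  then obtain s where "s \<in> S" "rsetdist m n s {x, y} \<noteq> rsetdist m n s {x', y'}"
    using assms xy unfolding two_resolving_def by blast
  moreover have "s \<in> rV m n"
    using assms \<open>s \<in> S\<close> by (auto simp: two_resolving_def)
  ultimately show "\<exists>s\<in>S. min (rook_dist s x) (rook_dist s y) \<noteq> min (rook_dist s x') (rook_dist s y')"
    using xy by (auto simp: rsetdist_doubleton)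
qed

lemma resolves_pairs_swap:
  assumes "resolves_pairs m n S"
  shows "resolves_pairs n m (prod.swap ` S)"
  unfolding resolves_pairs_def
proof (intro allI impI)
  fix x y x' y'
  assume xy: "{x, y} \<subseteq> rV n m \<and> {x', y'} \<subseteq> rV n m \<and> {x, y} \<noteq> {x', y'}"
  then have "{prod.swap x, prod.swap y} \<subseteq> rV m n" "{prod.swap x', prod.swap y'} \<subseteq> rV m n"
    "{prod.swap x, prod.swap y} \<noteq> {prod.swap x', prod.swap y'}"
    by (auto simp: rV_def doubleton_eq_iff)
  then obtain s where "s \<in> S" "min (rook_dist s (prod.swap x)) (rook_dist s (prod.swap y))
      \<noteq> min (rook_dist s (prod.swap x')) (rook_dist s (prod.swap y'))"
    by (rule resolves_pairsE[OF assms])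
  then show "\<exists>s\<in>prod.swap ` S. min (rook_dist s x) (rook_dist s y) \<noteq> min (rook_dist s x') (rook_dist s y')"
    by (metis image_eqI rook_dist_swap swap_swap)
qed

lemma rook_dist_min_diagonals:
  assumes "s \<notin> {(a, v), (a, u), (b, v), (b, u)}"
  shows "min (rook_dist s (a, v)) (rook_dist s (b, u)) = min (rook_dist s (a, u)) (rook_dist s (b, v))"
  using assms by (cases s) (auto simp: rook_dist_def)

lemma rook_dist_le_off_column:
  assumes "fst s \<noteq> a"
  shows "rook_dist s (b, u) \<le> rook_dist s (a, u)"
  using assms by (cases s) (auto simp: rook_dist_def)

lemma rook_dist_min_corner:
  assumes "s \<noteq> (c, w)" "fst s = a \<longrightarrow> s = (a, u)" "c \<noteq> a" "w \<noteq> u"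
  shows "min (rook_dist s (a, w)) (rook_dist s (c, u)) = min (rook_dist s (c, u)) (rook_dist s (c, w))"
  using assms by (cases s) (auto simp: rook_dist_def)

lemma quadruple_meets_resolving:
  assumes "resolves_pairs m n S" "a < m" "b < m" "u < n" "v < n" "a \<noteq> b" "u \<noteq> v"
  shows "S \<inter> {(a, v), (a, u), (b, v), (b, u)} \<noteq> {}"
proof
  assume disjoint: "S \<inter> {(a, v), (a, u), (b, v), (b, u)} = {}"
  have "{(a, v), (b, u)} \<subseteq> rV m n" "{(a, u), (b, v)} \<subseteq> rV m n"
    "{(a, v), (b, u)} \<noteq> {(a, u), (b, v)}"
    using assms by (auto simp: rV_def doubleton_eq_iff)
  then obtain s where "s \<in> S"
    "min (rook_dist s (a, v)) (rook_dist s (b, u)) \<noteq> min (rook_dist s (a, u)) (rook_dist s (b, v))"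
    by (rule resolves_pairsE[OF assms(1)])
  with disjoint show False
    using rook_dist_min_diagonals by blast
qed

lemma column_meets_resolving:
  assumes "resolves_pairs m n S" "S \<subseteq> rV m n" "2 \<le> m" "0 < n" "a < m"
  shows "S \<inter> rcolumn n a \<noteq> {}"
proof
  assume empty: "S \<inter> rcolumn n a = {}"
  have "0 < m" "1 < m"
    using assms(3) by simp_all
  then obtain b where b: "b < m" "b \<noteq> a"
    by (metis zero_neq_one)
  have "{(b, 0), (b, 0)} \<subseteq> rV m n" "{(b, 0), (a, 0)} \<subseteq> rV m n" "{(b, 0), (b, 0)} \<noteq> {(b, 0), (a, 0)}"
    using assms b by (auto simp: rV_def)
  then obtain s where s: "s \<in> S"
    "min (rook_dist s (b, 0)) (rook_dist s (b, 0)) \<noteq> min (rook_dist s (b, 0)) (rook_dist s (a, 0))"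
    by (rule resolves_pairsE[OF assms(1)])
  have "s \<notin> rcolumn n a"
    using s(1) empty by blast
  with s(1) assms(2) have "fst s \<noteq> a"
    by (cases s) (auto simp: rV_def rcolumn_def)
  then show False
    using s(2) rook_dist_le_off_column by (simp add: min_def)
qed

lemma column_not_singleton_resolving:
  assumes "resolves_pairs m n S" "S \<subseteq> rV m n" "a < m"
    and far: "\<forall>v\<in>S. \<exists>w\<in>rV m n - S. rook_dist v w = 2"
  shows "S \<inter> rcolumn n a \<noteq> {z}"
proof
  assume single: "S \<inter> rcolumn n a = {z}"
  then have "z \<in> S \<inter> rcolumn n a"
    by blast
  then obtain u where z: "z = (a, u)" "u < n" "z \<in> S"
    by (auto simp: rcolumn_def)
  with far obtain c w where cw: "(c, w) \<in> rV m n - S" "rook_dist (a, u) (c, w) = 2"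
    by fastforce
  then have ne: "c \<noteq> a" "w \<noteq> u"
    by (auto simp: rook_dist_def split: if_splits)
  have "{(a, w), (c, u)} \<subseteq> rV m n" "{(c, u), (c, w)} \<subseteq> rV m n"
    "{(a, w), (c, u)} \<noteq> {(c, u), (c, w)}"
    using assms z cw ne by (auto simp: rV_def doubleton_eq_iff)
  then obtain s where s: "s \<in> S"
    "min (rook_dist s (a, w)) (rook_dist s (c, u)) \<noteq> min (rook_dist s (c, u)) (rook_dist s (c, w))"
    by (rule resolves_pairsE[OF assms(1)])
  have "s \<noteq> (c, w)"
    using s(1) cw(1) by blast
  moreover have "fst s = a \<longrightarrow> s = (a, u)"
  proof
    assume "fst s = a"
    with s(1) assms(2) have "s \<in> S \<inter> rcolumn n a"
      by (cases s) (auto simp: rV_def rcolumn_def)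
    with single z show "s = (a, u)"
      by blast
  qed
  ultimately have "min (rook_dist s (a, w)) (rook_dist s (c, u)) = min (rook_dist s (c, u)) (rook_dist s (c, w))"
    using ne by (rule rook_dist_min_corner)
  with s(2) show False
    by contradiction
qed

lemma card_column_resolving:
  assumes "resolves_pairs m n S" "S \<subseteq> rV m n" "2 \<le> m" "0 < n" "a < m"
    and "\<forall>v\<in>S. \<exists>w\<in>rV m n - S. rook_dist v w = 2"
  shows "2 \<le> card (S \<inter> rcolumn n a)"
proof -
  have "finite (rV m n)"
    by (simp add: rV_def)
  then have "finite (S \<inter> rcolumn n a)"
    using assms(2) finite_subset by blast
  then have "card (S \<inter> rcolumn n a) \<noteq> 0" "card (S \<inter> rcolumn n a) \<noteq> 1"
    using column_meets_resolving[OF assms(1-5)] column_not_singleton_resolving[OF assms(1,2,5,6)]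
    by (auto simp: card_1_singleton_iff)
  then show ?thesis
    by linarith
qed

lemma card_row_resolving:
  assumes "resolves_pairs m n S" "S \<subseteq> rV m n" "0 < m" "2 \<le> n" "u < n"
    and far: "\<forall>v\<in>S. \<exists>w\<in>rV m n - S. rook_dist v w = 2"
  shows "2 \<le> card (S \<inter> rrow m u)"
proof -
  have "\<forall>v\<in>prod.swap ` S. \<exists>w\<in>rV n m - prod.swap ` S. rook_dist v w = 2"
  proof
    fix v assume "v \<in> prod.swap ` S"
    then obtain v' where v': "v' \<in> S" "v = prod.swap v'"
      by blast
    with far obtain w where "w \<in> rV m n - S" "rook_dist v' w = 2"
      by blast
    with v' show "\<exists>w\<in>rV n m - prod.swap ` S. rook_dist v w = 2"
      by (intro bexI[of _ "prod.swap w"]) (auto simp: rV_def image_iff)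
  qed
  then have "2 \<le> card (prod.swap ` S \<inter> rcolumn m u)"
    using assms by (intro card_column_resolving resolves_pairs_swap) (auto simp: rV_def)
  also have "prod.swap ` S \<inter> rcolumn m u = prod.swap ` (S \<inter> rrow m u)"
    by (auto simp: rcolumn_def rrow_def)
  also have "card \<dots> = card (S \<inter> rrow m u)"
    by (simp add: card_image)
  finally show ?thesis .
qed

lemma exists_far_vertex_outside:
  assumes "S \<subseteq> rV m n" "v \<in> S" "\<not> {v} \<union> (rV m n - rnbhd m n v) \<subseteq> S"
  shows "\<exists>w\<in>rV m n - S. rook_dist v w = 2"
  using assms by (auto simp: rnbhd_def radj_def rook_dist_def)

theorem mainTheorem11:
  fixes m n :: nat and S :: "(nat \<times> nat) set"
  assumes "m \<ge> 2" and "n \<ge> 2"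
    and "two_resolving m n S"
  shows "(\<exists>v\<in>rV m n. {v} \<union> (rV m n - rnbhd m n v) \<subseteq> S)
    \<or> ((\<forall>a<m. card (S \<inter> rcolumn n a) \<ge> 2)
       \<and> (\<forall>u<n. card (S \<inter> rrow m u) \<ge> 2)
       \<and> (\<forall>a<m. \<forall>b<m. \<forall>u<n. \<forall>v<n. a \<noteq> b \<and> u \<noteq> v \<longrightarrow>
            S \<inter> {(a, v), (a, u), (b, v), (b, u)} \<noteq> {}))"
proof (cases "\<exists>v\<in>rV m n. {v} \<union> (rV m n - rnbhd m n v) \<subseteq> S")
  case False
  have S: "S \<subseteq> rV m n"
    using assms(3) by (simp add: two_resolving_def)
  have far: "\<forall>v\<in>S. \<exists>w\<in>rV m n - S. rook_dist v w = 2"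
    using False S by (blast intro: exists_far_vertex_outside)
  have res: "resolves_pairs m n S"
    using assms(3) by (rule two_resolving_imp_resolves_pairs)
  show ?thesis
    using assms(1,2) card_column_resolving[OF res S _ _ _ far] card_row_resolving[OF res S _ _ _ far]
      quadruple_meets_resolving[OF res] by auto
qed simp

end
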